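(* In the setting below, for every $\varepsilon>0$ and $v>0$ there exists $\kappa>0$ such that for all sufficiently large $t$, $$\mathbb P\Big(\max_{n\in\mathbb N,\ n_t(-v)\le n\le n_t(v)}\frac{F_n-g(\log(n\sqrt{\sigma_t}))}{g'(\log(n\sqrt{\sigma_t}))}\le\kappa\Big)\ge1-\varepsilon,$$ where $n_t(\pm v)=\exp\{\lambda(\sigma_t\pm v\sqrt{\sigma_t})\}$.
   Context: Let $\lambda>0$. Let $\mu$ be a probability distribution on $(0,1)$ such that $m(x)=-\log\mu((x,1))$, $x\in[0,1)$, is twice differentiable on $[0,1)$ with $m'>0$, $m''>0$, $\lim_{x\uparrow1}m''(x)/(m'(x))^2=0$, $\lim_{x\uparrow1}m''(x)m(x)x/(m'(x))^2=\varkappa>0$, and $\lim_{x\uparrow1}m(x)/m'(x)=0$. Let $g=m^{-1}:[0,\infty)\to[0,1)$; for large $t$ let $x_t\in[0,t)$ be the unique solution of $(\log g)'(\lambda x)=\frac1{\lambda(t-x)}$ and $\sigma_t=\max\{1,x_t\}$. Let $(F_n)_{n\ge1}$ be i.i.d. with law $\mu$. *)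

theory Defs
  imports "HOL-Probability.Probability"
begin

definition tail_m :: "real measure \<Rightarrow> real \<Rightarrow> real" where
  "tail_m \<mu> x = - ln (measure \<mu> {x<..<1})"

definition inv_g :: "real measure \<Rightarrow> real \<Rightarrow> real" where
  "inv_g \<mu> = the_inv_into {0..<1} (tail_m \<mu>)"

definition x_t :: "real measure \<Rightarrow> real \<Rightarrow> real \<Rightarrow> real" where
  "x_t \<mu> lam t = (THE x. x \<in> {0..<t} \<and>
      deriv (\<lambda>y. ln (inv_g \<mu> y)) (lam * x) = 1 / (lam * (t - x)))"

definition sigma_t :: "real measure \<Rightarrow> real \<Rightarrow> real \<Rightarrow> real" where
  "sigma_t \<mu> lam t = max 1 (x_t \<mu> lam t)"

end

theory Submission
  imports Defs
begin

(* A union bound. With y_n = ln (n sqrt sigma) and g' = 1 / m' o g, convexity of m gives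
   m (g y + kappa g' y) >= y + kappa, so P (F_n > g y_n + kappa g' y_n) <= exp (- y_n - kappa)
   = exp (- kappa) / (n sqrt sigma). Over the window exp (lambda (sigma -+ v sqrt sigma)) the sum
   of 1/n is at most 1 + 2 lambda v sqrt sigma, so the failure probability is at most
   exp (- kappa) (1 + 2 lambda v) for every t. *)

lemma sum_inverse_nat_between_le:
  assumes "0 < a" "a \<le> b"
  shows "(\<Sum>n | a \<le> real n \<and> real n \<le> b. 1 / real n) \<le> 1 + ln b - ln a"
proof -
  define N1 where "N1 = nat \<lceil>a\<rceil>"
  define N2 where "N2 = nat \<lfloor>b\<rfloor>"
  have "a \<le> real N1" "real N2 \<le> b" using assms by (auto simp: N1_def N2_def)
  have "N1 > 0" using \<open>a \<le> real N1\<close> assms(1) by linarith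
  have window: "{n. a \<le> real n \<and> real n \<le> b} = {N1..N2}"
    using assms by (auto simp: N1_def N2_def nat_le_iff le_nat_iff ceiling_le_iff le_floor_iff)
  show ?thesis
  proof (cases "N1 \<le> N2")
    case False
    moreover have "ln a \<le> ln b" using assms by simp
    ultimately show ?thesis unfolding window by simp
  next
    case True
    have "(\<Sum>n\<in>{N1..N2}. 1 / real n) = 1 / real N1 + (harm N2 - harm N1)"
    proof -
      have "{1..N2} = {1..N1} \<union> {Suc N1..N2}" "{N1..N2} = insert N1 {Suc N1..N2}"
        using True \<open>N1 > 0\<close> by auto
      then show ?thesis by (simp add: harm_def sum.union_disjoint divide_inverse)
    qed
    also have "harm N2 - harm N1 \<le> ln (real N2) - ln (real N1)"
      using euler_mascheroni_sequence_decreasing[OF \<open>N1 > 0\<close> True] by simp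
    also have "1 / real N1 \<le> 1" using \<open>N1 > 0\<close> by simp
    finally have "(\<Sum>n\<in>{N1..N2}. 1 / real n) \<le> 1 + ln (real N2) - ln (real N1)" by simp
    moreover have "ln (real N2) \<le> ln b" using True \<open>N1 > 0\<close> \<open>real N2 \<le> b\<close> by simp
    moreover have "ln a \<le> ln (real N1)" using assms(1) \<open>a \<le> real N1\<close> by simp
    ultimately show ?thesis unfolding window by linarith
  qed
qed

lemma finite_nat_between: "finite {n::nat. a \<le> real n \<and> real n \<le> b}"
proof (rule finite_subset)
  show "{n::nat. a \<le> real n \<and> real n \<le> b} \<subseteq> {..nat \<lfloor>b\<rfloor>}"
    by (auto intro: le_nat_floor)
qed simp

lemma (in prob_space) prob_all_ge_one_minus_sum:
  assumes "finite I" and "\<And>i. i \<in> I \<Longrightarrow> {x \<in> space M. \<not> P i x} \<in> events"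
    and "\<And>i. i \<in> I \<Longrightarrow> prob {x \<in> space M. \<not> P i x} \<le> p i"
  shows "prob {x \<in> space M. \<forall>i\<in>I. P i x} \<ge> 1 - (\<Sum>i\<in>I. p i)"
proof -
  let ?B = "\<lambda>i. {x \<in> space M. \<not> P i x}"
  have "{x \<in> space M. \<forall>i\<in>I. P i x} = space M - (\<Union>i\<in>I. ?B i)" by auto
  moreover have "prob (\<Union>i\<in>I. ?B i) \<le> (\<Sum>i\<in>I. p i)"
    using finite_measure_subadditive_finite[of I ?B] assms sum_mono[of I "\<lambda>i. prob (?B i)" p]
    by fastforce
  moreover have "(\<Union>i\<in>I. ?B i) \<in> events" using assms(1,2) by blast
  ultimately show ?thesis using prob_compl by auto
qed

lemma DERIV_pos_imp_strict_mono_on: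
  fixes f f' :: "real \<Rightarrow> real"
  assumes "continuous_on {a..<b} f"
    and "\<And>x. a < x \<Longrightarrow> x < b \<Longrightarrow> (f has_real_derivative f' x) (at x)"
    and "\<And>x. a < x \<Longrightarrow> x < b \<Longrightarrow> f' x > 0"
  shows "strict_mono_on {a..<b} f"
proof (rule strict_mono_onI)
  fix x y assume xy: "x \<in> {a..<b}" "y \<in> {a..<b}" "x < y"
  show "f x < f y"
  proof (rule DERIV_pos_imp_increasing_open[OF \<open>x < y\<close>])
    show "\<exists>d. (f has_real_derivative d) (at z) \<and> d > 0" if "x < z" "z < y" for z
      using assms(2,3) xy that by (metis atLeastLessThan_iff le_less_trans less_trans)
    show "continuous_on {x..y} f"
      using xy by (auto intro: continuous_on_subset[OF assms(1)])
  qed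
qed

locale convex_log_tail =
  fixes \<mu> :: "real measure" and m' m'' :: "real \<Rightarrow> real"
  assumes mu_prob: "prob_space \<mu>" and mu_sets: "sets \<mu> = sets borel"
    and mu_supp: "measure \<mu> {0<..<1} = 1"
    and tail_pos: "\<forall>x\<in>{0..<1}. measure \<mu> {x<..<1} > 0"
    and d1: "\<forall>x\<in>{0..<1}. (tail_m \<mu> has_real_derivative m' x) (at x within {0..<1})"
    and d2: "\<forall>x\<in>{0..<1}. (m' has_real_derivative m'' x) (at x within {0..<1})"
    and m1_pos: "\<forall>x\<in>{0..<1}. m' x > 0"
    and m2_pos: "\<forall>x\<in>{0..<1}. m'' x > 0"
begin

abbreviation "m \<equiv> tail_m \<mu>"
abbreviation "g \<equiv> inv_g \<mu>"

lemma m_0: "m 0 = 0"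
  using mu_supp by (simp add: tail_m_def)

lemma at_within_unit_interval: "0 < x \<Longrightarrow> x < 1 \<Longrightarrow> at x within {0..<1} = at (x::real)"
  by (rule at_within_open_subset[of x "{0<..<1}"]) auto

lemma m_has_derivative: "0 < x \<Longrightarrow> x < 1 \<Longrightarrow> (m has_real_derivative m' x) (at x)"
  using d1 at_within_unit_interval[of x] by (metis atLeastLessThan_iff less_imp_le)

lemma m'_has_derivative: "0 < x \<Longrightarrow> x < 1 \<Longrightarrow> (m' has_real_derivative m'' x) (at x)"
  using d2 at_within_unit_interval[of x] by (metis atLeastLessThan_iff less_imp_le)

lemma continuous_on_m: "continuous_on {0..<1} m"
  using d1 by (intro DERIV_continuous_on) auto

lemma strict_mono_on_m: "strict_mono_on {0..<1} m"
  using d1 m1_pos m_has_derivative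
  by (intro DERIV_pos_imp_strict_mono_on[where f' = m'] DERIV_continuous_on) auto

lemma strict_mono_on_m': "strict_mono_on {0..<1} m'"
  using d2 m2_pos m'_has_derivative
  by (intro DERIV_pos_imp_strict_mono_on[where f' = m''] DERIV_continuous_on) auto

lemma m_above_tangent:
  assumes "0 < x" "x < 1" "0 < z" "z < 1"
  shows "m z \<ge> m x + m' x * (z - x)"
proof -
  have "convex_on {0<..<1} m"
    using m_has_derivative strict_mono_on_m'
    by (intro convex_on_realI[where f' = m'])
       (auto simp: strict_mono_on_def order.order_iff_strict)
  then have "m' x * (z - x) \<le> m z - m x"
    using assms m_has_derivative[of x]
    by (intro convex_on_imp_above_tangent[where A = "{0<..<1}"])
       (auto simp: at_within_open[of x "{0<..<1}"])
  then show ?thesis by simp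
qed

lemma space_mu: "space \<mu> = UNIV"
  using sets_eq_imp_space_eq[OF mu_sets] by simp

lemma measure_restrict_unit_interval:
  assumes "S \<in> sets borel"
  shows "measure \<mu> S = measure \<mu> (S \<inter> {0<..<1})"
proof -
  interpret prob_space \<mu> by (rule mu_prob)
  have "UNIV - {0<..<1::real} \<in> null_sets \<mu>"
    using prob_compl[of "{0<..<1}"] mu_supp space_mu mu_sets
    by (auto simp: emeasure_eq_measure null_sets_def)
  then have "S - {0<..<1} \<in> null_sets \<mu>"
    using assms mu_sets by (auto intro: null_sets_subset)
  then show ?thesis
    using measure_Un_null_set[of "S \<inter> {0<..<1}" \<mu> "S - {0<..<1}"] assms mu_sets
    by (simp add: Int_Diff_Un)
qed

lemma measure_greaterThan:
  assumes "0 \<le> c" "c < 1"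
  shows "measure \<mu> {c<..} = exp (- m c)"
proof -
  have "{c<..} \<inter> {0<..<1} = {c<..<1}" using assms by auto
  then have "measure \<mu> {c<..} = measure \<mu> {c<..<1}"
    using measure_restrict_unit_interval[of "{c<..}"] by simp
  also have "\<dots> = exp (- m c)" using tail_pos assms by (simp add: tail_m_def)
  finally show ?thesis .
qed

lemma measure_tail_tendsto_0: "(\<lambda>k. measure \<mu> {1 - 1 / real (Suc k)<..<1}) \<longlonglongrightarrow> 0"
proof -
  interpret prob_space \<mu> by (rule mu_prob)
  define A where "A k = {1 - 1 / real (Suc k)<..<(1::real)}" for k
  have "range A \<subseteq> sets \<mu>" by (auto simp: A_def mu_sets)
  moreover have "decseq A"
  proof (rule decseq_SucI)
    fix k
    have "1 / real (Suc (Suc k)) \<le> 1 / real (Suc k)" by (simp add: frac_le)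
    then show "A (Suc k) \<subseteq> A k" by (auto simp: A_def)
  qed
  moreover have "(\<Inter>k. A k) = {}"
  proof (rule equals0I)
    fix x assume x: "x \<in> (\<Inter>k. A k)"
    then have "0 < 1 - x" by (auto simp: A_def)
    then obtain n where "n > 0" "inverse (real n) < 1 - x"
      using ex_inverse_of_nat_less by blast
    then have "x \<notin> A (n - 1)" by (simp add: A_def inverse_eq_divide)
    with x show False by blast
  qed
  ultimately show ?thesis
    using finite_Lim_measure_decseq[of A] by (simp add: A_def)
qed

lemma m_unbounded: "\<exists>x\<in>{0..<1}. B < m x"
proof -
  obtain k where k: "measure \<mu> {1 - 1 / real (Suc k)<..<1} < exp (- B)"
    using order_tendstoD(2)[OF measure_tail_tendsto_0, of "exp (- B)"]
    by (auto simp: eventually_sequentially)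
  define x where "x = 1 - 1 / real (Suc k)"
  have "x \<in> {0..<1}" by (simp add: x_def)
  moreover have "ln (measure \<mu> {x<..<1}) < ln (exp (- B))"
    using k tail_pos \<open>x \<in> {0..<1}\<close> by (subst ln_less_cancel_iff) (simp_all add: x_def)
  ultimately show ?thesis by (intro bexI[of _ x]) (auto simp: tail_m_def)
qed

lemma bij_betw_m: "bij_betw m {0..<1} {0..}"
proof -
  have "m ` {0..<1} = {0..}"
  proof
    show "m ` {0..<1} \<subseteq> {0..}"
      using strict_mono_on_leD[OF strict_mono_on_m, of 0] m_0 by auto
    show "{0..} \<subseteq> m ` {0..<1}"
    proof
      fix y :: real assume "y \<in> {0..}"
      obtain b where b: "b \<in> {0..<1}" "y < m b" using m_unbounded by blast
      then have "continuous_on {0..b} m" by (auto intro: continuous_on_subset[OF continuous_on_m])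
      then obtain x where "0 \<le> x" "x \<le> b" "m x = y"
        using IVT'[of m 0 y b] b \<open>y \<in> {0..}\<close> m_0 by auto
      then show "y \<in> m ` {0..<1}" using b by force
    qed
  qed
  then show ?thesis
    using strict_mono_on_imp_inj_on[OF strict_mono_on_m] by (simp add: bij_betw_def)
qed

lemma g_m: "x \<in> {0..<1} \<Longrightarrow> g (m x) = x"
  using bij_betw_m by (simp add: inv_g_def bij_betw_def the_inv_into_f_f)

lemma m_g: "y \<ge> 0 \<Longrightarrow> m (g y) = y"
  using bij_betw_m by (simp add: inv_g_def f_the_inv_into_f_bij_betw)

lemma g_in_unit_interval: "y \<ge> 0 \<Longrightarrow> g y \<in> {0..<1}"
  using bij_betw_the_inv_into[OF bij_betw_m] by (auto simp: inv_g_def bij_betw_def)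

lemma g_pos:
  assumes "y > 0"
  shows "g y > 0"
proof -
  have "g y \<noteq> 0" using m_g[of y] m_0 assms by auto
  then show ?thesis using g_in_unit_interval[of y] assms by simp
qed

lemma g_has_derivative:
  assumes "y > 0"
  shows "(g has_real_derivative inverse (m' (g y))) (at y)"
proof -
  have "g y \<in> {0<..<1}" using g_in_unit_interval[of y] g_pos[of y] assms by simp
  have "m' (g y) \<noteq> 0" using m1_pos g_in_unit_interval[of y] assms by force
  show ?thesis
    unfolding has_field_derivative_def
  proof (rule has_derivative_inverse_strong_x[where S = "{0<..<1}" and f = m])
    show "continuous_on {0<..<1} m" by (rule continuous_on_subset[OF continuous_on_m]) auto
    show "(m has_derivative (*) (m' (g y))) (at (g y))"
      using m_has_derivative \<open>g y \<in> {0<..<1}\<close> by (simp add: has_field_derivative_def)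
    show "(*) (m' (g y)) \<circ> (*) (inverse (m' (g y))) = id"
      using \<open>m' (g y) \<noteq> 0\<close> by (simp add: fun_eq_iff)
    show "g (m x) = x" if "x \<in> {0<..<1}" for x using g_m that by simp
  qed (use assms \<open>g y \<in> {0<..<1}\<close> m_g in auto)
qed

lemma deriv_g: "y > 0 \<Longrightarrow> deriv g y = inverse (m' (g y))"
  using g_has_derivative by (rule DERIV_imp_deriv)

lemma measure_exceedance_pos:
  assumes "y > 0" "\<kappa> > 0"
  shows "measure \<mu> {z. \<kappa> < (z - g y) / deriv g y} \<le> exp (- y - \<kappa>)"
proof -
  define x where "x = g y"
  have x: "0 < x" "x < 1" "m x = y"
    using g_pos g_in_unit_interval m_g assms by (auto simp: x_def)
  have "m' x > 0" using m1_pos x by simp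
  define c where "c = x + \<kappa> / m' x"
  have "x < c" using \<open>m' x > 0\<close> assms by (simp add: c_def)
  have "\<kappa> < (z - g y) / deriv g y \<longleftrightarrow> c < z" for z
  proof -
    have "(z - g y) / deriv g y = (z - x) * m' x"
      using deriv_g assms by (simp add: x_def divide_inverse)
    then have "\<kappa> < (z - g y) / deriv g y \<longleftrightarrow> \<kappa> < (z - x) * m' x" by (simp only:)
    also have "\<dots> \<longleftrightarrow> c < z" using \<open>m' x > 0\<close> by (simp add: c_def field_simps)
    finally show ?thesis .
  qed
  then have "{z. \<kappa> < (z - g y) / deriv g y} = {c<..}" by auto
  moreover have "measure \<mu> {c<..} \<le> exp (- y - \<kappa>)"
  proof (cases "c < 1")
    case True
    have "y + \<kappa> \<le> m c"
      using m_above_tangent[of x c] x \<open>x < c\<close> True \<open>m' x > 0\<close> by (simp add: c_def)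
    then show ?thesis using measure_greaterThan[of c] True x \<open>x < c\<close> by simp
  next
    case False
    then have "{c<..} \<inter> {0<..<1} = {}" by auto
    then show ?thesis using measure_restrict_unit_interval[of "{c<..}"] by simp
  qed
  ultimately show ?thesis by simp
qed

(* inv_g is the_inv_into {0..<1}, unspecified left of 0, so deriv g 0 is a junk value; the
   hypothesis on kappa disposes of the one term with y = 0 (n = 1 and sigma = 1). *)
lemma measure_exceedance_0:
  assumes "\<kappa> > 0" "1 / \<bar>deriv g 0\<bar> \<le> \<kappa>"
  shows "measure \<mu> {z. \<kappa> < (z - g 0) / deriv g 0} = 0"
proof -
  have "g 0 = 0" using g_m[of 0] m_0 by simp
  have "z / deriv g 0 \<le> \<kappa>" if "0 < z" "z < 1" for z
  proof (cases "deriv g 0 > 0")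
    case True
    then have "z / deriv g 0 \<le> 1 / \<bar>deriv g 0\<bar>" using that by (simp add: divide_right_mono)
    then show ?thesis using assms by simp
  next
    case False
    then have "z / deriv g 0 \<le> 0" using that by (simp add: divide_nonneg_nonpos)
    then show ?thesis using assms by simp
  qed
  then have "{z. \<kappa> < (z - g 0) / deriv g 0} \<inter> {0<..<1} = {}"
    using \<open>g 0 = 0\<close> by force
  then show ?thesis
    using measure_restrict_unit_interval[of "{z. \<kappa> < (z - g 0) / deriv g 0}"] by simp
qed

lemma measure_exceedance_le:
  assumes "y \<ge> 0" "\<kappa> > 0" "1 / \<bar>deriv g 0\<bar> \<le> \<kappa>"
  shows "measure \<mu> {z. \<kappa> < (z - g y) / deriv g y} \<le> exp (- y - \<kappa>)"
  using assms measure_exceedance_pos[of y \<kappa>] measure_exceedance_0[of \<kappa>]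
  by (cases "y = 0") auto

lemma prob_exceedance_le:
  assumes "X \<in> borel_measurable M" "distr M borel X = \<mu>"
    and "y \<ge> 0" "\<kappa> > 0" "1 / \<bar>deriv g 0\<bar> \<le> \<kappa>"
  shows "measure M {\<omega> \<in> space M. \<kappa> < (X \<omega> - g y) / deriv g y} \<le> exp (- y - \<kappa>)"
proof -
  let ?S = "{z. \<kappa> < (z - g y) / deriv g y}"
  have "?S \<in> sets borel" by measurable
  then have "measure M {\<omega> \<in> space M. \<kappa> < (X \<omega> - g y) / deriv g y} = measure \<mu> ?S"
    using measure_distr[OF assms(1), of ?S] assms(2) by (simp add: vimage_def Int_def conj_commute)
  then show ?thesis using measure_exceedance_le[OF assms(3-5)] by simp
qed

lemma prob_window_exceedance:
  fixes M :: "'a measure" and F :: "nat \<Rightarrow> 'a \<Rightarrow> real"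
  assumes "prob_space M"
    and F_meas: "\<And>n. n \<ge> 1 \<Longrightarrow> F n \<in> borel_measurable M"
    and F_law: "\<And>n. n \<ge> 1 \<Longrightarrow> distr M borel (F n) = \<mu>"
    and "\<sigma> \<ge> 1" "lam \<ge> 0" "v \<ge> 0" "\<kappa> > 0" "1 / \<bar>deriv g 0\<bar> \<le> \<kappa>"
  shows "measure M {\<omega> \<in> space M. \<forall>n::nat.
            exp (lam * (\<sigma> - v * sqrt \<sigma>)) \<le> real n \<and> real n \<le> exp (lam * (\<sigma> + v * sqrt \<sigma>)) \<longrightarrow>
            (F n \<omega> - g (ln (real n * sqrt \<sigma>))) / deriv g (ln (real n * sqrt \<sigma>)) \<le> \<kappa>}
         \<ge> 1 - exp (- \<kappa>) * (1 + 2 * lam * v)"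
proof -
  interpret M: prob_space M by fact
  define a where "a = exp (lam * (\<sigma> - v * sqrt \<sigma>))"
  define b where "b = exp (lam * (\<sigma> + v * sqrt \<sigma>))"
  define W where "W = {n::nat. a \<le> real n \<and> real n \<le> b}"
  define y where "y n = ln (real n * sqrt \<sigma>)" for n
  have "a \<le> b" using assms by (auto simp: a_def b_def intro!: mult_left_mono)
  have "n \<ge> 1" if "n \<in> W" for n
  proof -
    have "0 < a" by (simp add: a_def)
    also have "a \<le> real n" using that by (simp add: W_def)
    finally show ?thesis by simp
  qed
  have bad_event: "measure M {\<omega> \<in> space M. \<kappa> < (F n \<omega> - g (y n)) / deriv g (y n)}
      \<le> exp (- \<kappa>) / sqrt \<sigma> * (1 / real n)" if "n \<ge> 1" for n
  proof -
    have "1 * 1 \<le> real n * sqrt \<sigma>" using that \<open>\<sigma> \<ge> 1\<close> by (intro mult_mono) auto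
    then have "y n \<ge> 0" by (simp add: y_def)
    then have "measure M {\<omega> \<in> space M. \<kappa> < (F n \<omega> - g (y n)) / deriv g (y n)}
        \<le> exp (- y n - \<kappa>)"
      using prob_exceedance_le[OF F_meas[OF that] F_law[OF that]] assms(7,8) by blast
    also have "exp (- y n - \<kappa>) = exp (- \<kappa>) / sqrt \<sigma> * (1 / real n)"
      using that \<open>\<sigma> \<ge> 1\<close> by (simp add: y_def exp_diff exp_minus field_simps)
    finally show ?thesis .
  qed
  have "measure M {\<omega> \<in> space M. \<forall>n\<in>W. (F n \<omega> - g (y n)) / deriv g (y n) \<le> \<kappa>}
      \<ge> 1 - (\<Sum>n\<in>W. exp (- \<kappa>) / sqrt \<sigma> * (1 / real n))"
    using \<open>\<And>n. n \<in> W \<Longrightarrow> n \<ge> 1\<close> bad_event F_meas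
    by (intro M.prob_all_ge_one_minus_sum) (auto simp: W_def finite_nat_between not_le)
  moreover have "(\<Sum>n\<in>W. exp (- \<kappa>) / sqrt \<sigma> * (1 / real n)) \<le> exp (- \<kappa>) * (1 + 2 * lam * v)"
  proof -
    have "(\<Sum>n\<in>W. exp (- \<kappa>) / sqrt \<sigma> * (1 / real n)) \<le> exp (- \<kappa>) / sqrt \<sigma> * (1 + ln b - ln a)"
      unfolding W_def sum_distrib_left[symmetric]
      using \<open>a \<le> b\<close> \<open>\<sigma> \<ge> 1\<close>
      by (intro mult_left_mono sum_inverse_nat_between_le) (auto simp: a_def)
    also have "\<dots> = exp (- \<kappa>) * (1 / sqrt \<sigma> + 2 * lam * v)"
      using \<open>\<sigma> \<ge> 1\<close> by (simp add: a_def b_def field_simps)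
    also have "\<dots> \<le> exp (- \<kappa>) * (1 + 2 * lam * v)"
      using \<open>\<sigma> \<ge> 1\<close> by simp
    finally show ?thesis .
  qed
  ultimately show ?thesis by (simp add: W_def y_def a_def b_def)
qed

end

theorem lemma16:
  fixes lam :: real and \<mu> :: "real measure" and m' m'' :: "real \<Rightarrow> real"
    and \<kappa>0 :: real
    and M :: "'a measure" and F :: "nat \<Rightarrow> 'a \<Rightarrow> real"
  assumes lam: "lam > 0"
    and mu_prob: "prob_space \<mu>" and mu_sets: "sets \<mu> = sets borel"
    and mu_supp: "measure \<mu> {0<..<1} = 1"
    and tail_pos: "\<forall>x\<in>{0..<1}. measure \<mu> {x<..<1} > 0"
    and d1: "\<forall>x\<in>{0..<1}. (tail_m \<mu> has_real_derivative m' x) (at x within {0..<1})"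
    and d2: "\<forall>x\<in>{0..<1}. (m' has_real_derivative m'' x) (at x within {0..<1})"
    and m1_pos: "\<forall>x\<in>{0..<1}. m' x > 0"
    and m2_pos: "\<forall>x\<in>{0..<1}. m'' x > 0"
    and lim1: "((\<lambda>x. m'' x / (m' x)\<^sup>2) \<longlongrightarrow> 0) (at_left 1)"
    and lim2: "((\<lambda>x. m'' x * tail_m \<mu> x * x / (m' x)\<^sup>2) \<longlongrightarrow> \<kappa>0) (at_left 1)"
    and kappa0_pos: "\<kappa>0 > 0"
    and lim3: "((\<lambda>x. tail_m \<mu> x / m' x) \<longlongrightarrow> 0) (at_left 1)"
    and M_prob: "prob_space M"
    and F_indep: "prob_space.indep_vars M (\<lambda>_. borel) F {1..}"
    and F_law: "\<forall>n\<ge>1. distr M borel (F n) = \<mu>"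
  shows "\<forall>\<epsilon>>0. \<forall>v>0. \<exists>\<kappa>>0. eventually (\<lambda>t.
           measure M {\<omega> \<in> space M. \<forall>n::nat.
              exp (lam * (sigma_t \<mu> lam t - v * sqrt (sigma_t \<mu> lam t))) \<le> real n \<and>
              real n \<le> exp (lam * (sigma_t \<mu> lam t + v * sqrt (sigma_t \<mu> lam t))) \<longrightarrow>
              (F n \<omega> - inv_g \<mu> (ln (real n * sqrt (sigma_t \<mu> lam t))))
                / deriv (inv_g \<mu>) (ln (real n * sqrt (sigma_t \<mu> lam t))) \<le> \<kappa>}
           \<ge> 1 - \<epsilon>) at_top"
proof (intro allI impI, goal_cases)
  case (1 \<epsilon> v)
  interpret convex_log_tail \<mu> m' m''
    unfolding convex_log_tail_def
    using mu_prob mu_sets mu_supp tail_pos d1 d2 m1_pos m2_pos by blast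
  define C where "C = 1 + 2 * lam * v"
  define \<kappa> where "\<kappa> = max 1 (max (1 / \<bar>deriv g 0\<bar>) (ln (C / \<epsilon>)))"
  have "C > 0" using lam 1 by (simp add: C_def add_pos_pos)
  have "exp (- \<kappa>) * C \<le> exp (- ln (C / \<epsilon>)) * C"
    using \<open>C > 0\<close> by (simp add: \<kappa>_def)
  also have "\<dots> = \<epsilon>" using \<open>C > 0\<close> 1 by (simp add: exp_minus)
  finally have "1 - \<epsilon> \<le> 1 - exp (- \<kappa>) * C" by simp
  moreover have "F n \<in> borel_measurable M" if "n \<ge> 1" for n
    using F_indep that by (simp add: prob_space.indep_vars_def2[OF M_prob])
  moreover have "sigma_t \<mu> lam t \<ge> 1" for t by (simp add: sigma_t_def)
  ultimately show ?case
    using F_law lam 1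
    by (intro exI[of _ \<kappa>] conjI always_eventually allI
          order.trans[OF _ prob_window_exceedance[OF M_prob]])
       (auto simp: \<kappa>_def C_def)
qed

end
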